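(* Let $\mu$ be a compactly supported finite positive Borel measure on $\mathbb{R}^{2d}=\mathbb{R}^d\times\mathbb{R}^d$ such that the pushforward measure $\mu_{(-)}$ on $\mathbb{R}^d$ is absolutely continuous with respect to Lebesgue measure with density $\frac{d\mu_{(-)}}{dt}\in L^\infty(\mathbb{R}^d)$. Then $T_\mu\colon L^1(\mathbb{R}^d)\times L^1(\mathbb{R}^d)\to L^1(\mathbb{R}^d)$, and consequently $T_\mu\colon L^1(\mathbb{R}^d)\times L^1(\mathbb{R}^d)\to L^s(\mathbb{R}^d)$ for every $s\in[\frac12,1]$. Moreover, if $1\le p<q<\infty$ and the linear operator $T_{\mu_{(-)}}$ is bounded $L^p(\mathbb{R}^d)\to L^q(\mathbb{R}^d)$, then $T_\mu\colon L^{q'}(\mathbb{R}^d)\times L^p(\mathbb{R}^d)\to L^1(\mathbb{R}^d)$, and consequently $T_\mu\colon L^{q'}(\mathbb{R}^d)\times L^p(\mathbb{R}^d)\to L^s(\mathbb{R}^d)$ for every $s\in\left[\frac{pq'}{p+q'},1\right]$, where $q'$ is the conjugate exponent of $q$.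
   Context: The pushforward measure is $\mu_{(-)}(A):=\int_{\mathbb{R}^{2d}}1_A(y-z)\,d\mu(y,z)$ for Borel $A\subseteq\mathbb{R}^d$. The bilinear operator associated to $\mu$ is $T_\mu(f,g)(x)=\int_{\mathbb{R}^{2d}} f(x-y)\,g(x-z)\,d\mu(y,z)$, and the linear operator associated to $\mu_{(-)}$ is $T_{\mu_{(-)}}(g)(x)=\int_{\mathbb{R}^d} g(x-t)\,d\mu_{(-)}(t)$. "$T_\mu\colon L^a\times L^b\to L^c$" means there is a constant $C$ with $\|T_\mu(f,g)\|_{L^c}\le C\|f\|_{L^a}\|g\|_{L^b}$ for all $f\in L^a$, $g\in L^b$. *)

theory Defs
  imports "HOL-Analysis.Analysis"
begin

definition memLp :: "real \<Rightarrow> ('a::euclidean_space \<Rightarrow> real) \<Rightarrow> bool" where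
  "memLp p f \<longleftrightarrow> f \<in> borel_measurable lborel \<and> integrable lborel (\<lambda>x. \<bar>f x\<bar> powr p)"

definition lp_norm :: "real \<Rightarrow> ('a::euclidean_space \<Rightarrow> real) \<Rightarrow> real" where
  "lp_norm p f = (\<integral>x. \<bar>f x\<bar> powr p \<partial>lborel) powr (1 / p)"

definition T_bil :: "('a::euclidean_space \<times> 'a) measure \<Rightarrow> ('a \<Rightarrow> real) \<Rightarrow> ('a \<Rightarrow> real) \<Rightarrow> 'a \<Rightarrow> real" where
  "T_bil \<mu> f g x = (\<integral>yz. f (x - fst yz) * g (x - snd yz) \<partial>\<mu>)"

definition T_lin :: "'a::euclidean_space measure \<Rightarrow> ('a \<Rightarrow> real) \<Rightarrow> 'a \<Rightarrow> real" where
  "T_lin \<nu> g x = (\<integral>t. g (x - t) \<partial>\<nu>)"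

definition push_minus :: "('a::euclidean_space \<times> 'a) measure \<Rightarrow> 'a measure" where
  "push_minus \<mu> = distr \<mu> lborel (\<lambda>yz. fst yz - snd yz)"

definition bil_bounded :: "('a::euclidean_space \<times> 'a) measure \<Rightarrow> real \<Rightarrow> real \<Rightarrow> real \<Rightarrow> bool" where
  "bil_bounded \<mu> a b c \<longleftrightarrow> (\<exists>C. \<forall>f g. memLp a f \<longrightarrow> memLp b g \<longrightarrow>
      (AE x in lborel. integrable \<mu> (\<lambda>yz. f (x - fst yz) * g (x - snd yz))) \<and>
      memLp c (T_bil \<mu> f g) \<and>
      lp_norm c (T_bil \<mu> f g) \<le> C * lp_norm a f * lp_norm b g)"

definition lin_bounded :: "'a::euclidean_space measure \<Rightarrow> real \<Rightarrow> real \<Rightarrow> bool" where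
  "lin_bounded \<nu> p q \<longleftrightarrow> (\<exists>C. \<forall>g. memLp p g \<longrightarrow>
      (AE x in lborel. integrable \<nu> (\<lambda>t. g (x - t))) \<and>
      memLp q (T_lin \<nu> g) \<and>
      lp_norm q (T_lin \<nu> g) \<le> C * lp_norm p g)"

end

theory Submission
  imports Defs
begin

(* Fubini and the substitution x = y - w turn the integral of |f(x - y)| |g(x - z)| d\<mu>(y,z) dx
   into the integral over w of |f(-w)| times the integral of |g(t - w)| against \<mu>_(-).  For
   f, g in L^1 the inner integral is at most B |g|_1, B an essential bound of the density; for
   f in L^q' and g in L^p it is T_\<mu>_(-) applied to the reflection of |g|, and Hoelder's inequality
   closes the estimate.  Either way T_\<mu> maps into L^1.

   For s < 1, compact support of \<mu> makes T_\<mu> local: on a ball B(u,R), T_\<mu>(f,g) only depends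
   on f and g on B(u,2R).  Jensen's inequality on the ball bounds the integral of |T_\<mu>(f,g)|^s
   over B(u,R) by |B(u,R)|^(1-s) (C \<alpha>(u) \<beta>(u))^s, where \<alpha>(u), \<beta>(u) are the L^a, L^b norms of
   f, g on B(u,2R).  After averaging over u, Young's inequality with weights s/a and 1 - s/a
   bounds the average of (\<alpha> \<beta>)^s by (|f|_a |g|_b)^s; this is where s/a + s/b \<ge> 1 enters,
   through \<beta>(u) \<le> |g|_b. *)

section \<open>L^p norms\<close>

lemma lp_norm_nonneg: "0 \<le> lp_norm p f"
  by (simp add: lp_norm_def)

lemma lp_norm_powr:
  assumes "0 < p"
  shows "lp_norm p f powr p = (\<integral>x. \<bar>f x\<bar> powr p \<partial>lborel)"
  using assms by (simp add: lp_norm_def powr_powr integral_nonneg_AE)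

lemma nn_integral_abs_powr_eq:
  assumes "memLp p f" "0 < p"
  shows "(\<integral>\<^sup>+x. ennreal (\<bar>f x\<bar> powr p) \<partial>lborel) = ennreal (lp_norm p f powr p)"
  using assms by (simp add: memLp_def lp_norm_powr nn_integral_eq_integral)

lemma nn_integral_abs_eq_lp_norm_1:
  assumes "memLp 1 f"
  shows "(\<integral>\<^sup>+x. ennreal \<bar>f x\<bar> \<partial>lborel) = ennreal (lp_norm 1 f)"
  using nn_integral_abs_powr_eq[OF assms] by (simp add: lp_norm_nonneg)

lemma memLp_of_nn_integral_le:
  assumes f[measurable]: "f \<in> borel_measurable borel" and p: "0 < p"
    and Y: "0 \<le> Y" and le: "(\<integral>\<^sup>+x. ennreal (\<bar>f x\<bar> powr p) \<partial>lborel) \<le> ennreal Y"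
  shows "memLp p f" and "lp_norm p f \<le> Y powr (1 / p)"
proof -
  have int: "integrable lborel (\<lambda>x. \<bar>f x\<bar> powr p)"
    using le by (intro integrableI_bounded) (auto simp: top.not_eq_extremum intro: order_le_less_trans)
  then show "memLp p f"
    by (simp add: memLp_def)
  have "(\<integral>x. \<bar>f x\<bar> powr p \<partial>lborel) \<le> Y"
    using le int Y by (subst (asm) nn_integral_eq_integral) auto
  then show "lp_norm p f \<le> Y powr (1 / p)"
    unfolding lp_norm_def using p by (intro powr_mono2) auto
qed

lemma abs_indicator_mult_powr:
  fixes f :: "'a \<Rightarrow> real"
  shows "0 < p \<Longrightarrow> \<bar>indicator A x * f x\<bar> powr p = indicator A x * \<bar>f x\<bar> powr p"
  by (simp add: indicator_def)

lemma memLp_indicator_mult: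
  fixes f :: "'a::euclidean_space \<Rightarrow> real"
  assumes "memLp p f" "0 < p" "A \<in> sets borel"
  shows "memLp p (\<lambda>x. indicator A x * f x)"
proof -
  have [measurable]: "f \<in> borel_measurable borel" "A \<in> sets borel"
    using assms by (simp_all add: memLp_def)
  show ?thesis
    using assms integrable_mult_indicator[of A lborel "\<lambda>x. \<bar>f x\<bar> powr p"]
    by (simp add: memLp_def abs_indicator_mult_powr)
qed

lemma lp_norm_indicator_mult_le:
  fixes f :: "'a::euclidean_space \<Rightarrow> real"
  assumes "memLp p f" "0 < p" "A \<in> sets borel"
  shows "lp_norm p (\<lambda>x. indicator A x * f x) \<le> lp_norm p f"
proof -
  have "(\<integral>x. indicator A x * \<bar>f x\<bar> powr p \<partial>lborel) \<le> (\<integral>x. \<bar>f x\<bar> powr p \<partial>lborel)"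
    using assms memLp_indicator_mult[OF assms] unfolding memLp_def abs_indicator_mult_powr[OF assms(2)]
    by (intro integral_mono) (auto simp: indicator_def)
  then show ?thesis
    using assms(2) by (simp add: lp_norm_def abs_indicator_mult_powr powr_mono2 integral_nonneg_AE)
qed

lemma lp_norm_eq_0_imp_AE:
  assumes "memLp p f" "0 < p" "lp_norm p f = 0"
  shows "AE x in lborel. f x = 0"
proof -
  have [measurable]: "f \<in> borel_measurable borel"
    using assms(1) by (simp add: memLp_def)
  have "(\<integral>\<^sup>+x. ennreal (\<bar>f x\<bar> powr p) \<partial>lborel) = 0"
    using nn_integral_abs_powr_eq[OF assms(1,2)] assms(2,3) by simp
  then have "AE x in lborel. ennreal (\<bar>f x\<bar> powr p) = 0"
    by (subst (asm) nn_integral_0_iff_AE) auto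
  then show ?thesis
    by eventually_elim simp
qed

lemma nn_integral_lborel_translate:
  fixes f :: "'a::euclidean_space \<Rightarrow> ennreal"
  assumes [measurable]: "f \<in> borel_measurable borel"
  shows "(\<integral>\<^sup>+x. f (x + c) \<partial>lborel) = (\<integral>\<^sup>+x. f x \<partial>lborel)"
proof -
  have "(\<integral>\<^sup>+x. f x \<partial>lborel) = (\<integral>\<^sup>+x. f x \<partial>distr lborel borel ((+) c))"
    by (simp add: lborel_distr_plus)
  also have "\<dots> = (\<integral>\<^sup>+x. f (x + c) \<partial>lborel)"
    by (subst nn_integral_distr) (auto simp: add.commute)
  finally show ?thesis ..
qed

lemma nn_integral_lborel_reflect:
  fixes f :: "'a::euclidean_space \<Rightarrow> ennreal"
  assumes [measurable]: "f \<in> borel_measurable borel"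
  shows "(\<integral>\<^sup>+x. f (c - x) \<partial>lborel) = (\<integral>\<^sup>+x. f x \<partial>lborel)"
proof -
  have "(\<integral>\<^sup>+x. f x \<partial>lborel)
      = (\<integral>\<^sup>+x. f x \<partial>density (distr lborel borel (\<lambda>x. c + (-1::real) *\<^sub>R x)) (\<lambda>_. \<bar>-1::real\<bar> ^ DIM('a)))"
    by (subst lborel_affine[of "-1" c, symmetric]) auto
  also have "\<dots> = (\<integral>\<^sup>+x. f (c - x) \<partial>lborel)"
    by (simp add: nn_integral_density nn_integral_distr)
  finally show ?thesis ..
qed

lemma
  fixes f :: "'a::euclidean_space \<Rightarrow> real"
  assumes "memLp p f"
  shows memLp_reflect: "memLp p (\<lambda>x. f (- x))"
    and lp_norm_reflect: "lp_norm p (\<lambda>x. f (- x)) = lp_norm p f"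
proof -
  have [measurable]: "f \<in> borel_measurable borel" and int: "integrable lborel (\<lambda>x. \<bar>f x\<bar> powr p)"
    using assms by (auto simp: memLp_def)
  have "(\<integral>\<^sup>+x. ennreal (\<bar>f (- x)\<bar> powr p) \<partial>lborel) = (\<integral>\<^sup>+x. ennreal (\<bar>f x\<bar> powr p) \<partial>lborel)"
    using nn_integral_lborel_reflect[of "\<lambda>x. ennreal (\<bar>f x\<bar> powr p)" 0] by simp
  also have "\<dots> = ennreal (\<integral>x. \<bar>f x\<bar> powr p \<partial>lborel)"
    using int by (simp add: nn_integral_eq_integral)
  finally have "integrable lborel (\<lambda>x. \<bar>f (- x)\<bar> powr p) \<and>
      (\<integral>x. \<bar>f (- x)\<bar> powr p \<partial>lborel) = (\<integral>x. \<bar>f x\<bar> powr p \<partial>lborel)"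
    by (subst (asm) nn_integral_eq_integrable) (auto simp: integral_nonneg_AE)
  then show "memLp p (\<lambda>x. f (- x))" "lp_norm p (\<lambda>x. f (- x)) = lp_norm p f"
    by (simp_all add: memLp_def lp_norm_def)
qed

lemma nn_integral_mult_le_lp_norm:
  fixes f g :: "'a::euclidean_space \<Rightarrow> real"
  assumes a: "1 < a" and b: "1 < b" and ab: "1 / a + 1 / b = 1"
    and f: "memLp a f" and g: "memLp b g"
  shows "(\<integral>\<^sup>+x. ennreal (\<bar>f x\<bar> * \<bar>g x\<bar>) \<partial>lborel) \<le> ennreal (lp_norm a f * lp_norm b g)"
proof -
  have [measurable]: "f \<in> borel_measurable borel" "g \<in> borel_measurable borel"
    using f g by (simp_all add: memLp_def)
  define Nf Ng where "Nf = lp_norm a f" and "Ng = lp_norm b g"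
  consider "Nf = 0 \<or> Ng = 0" | "0 < Nf" "0 < Ng"
    using lp_norm_nonneg unfolding Nf_def Ng_def by (metis order_less_le)
  then show ?thesis
  proof cases
    case 1
    then have "AE x in lborel. f x = 0 \<or> g x = 0"
      using lp_norm_eq_0_imp_AE[OF f] lp_norm_eq_0_imp_AE[OF g] a b unfolding Nf_def Ng_def
      by (auto elim: eventually_mono)
    then have "(\<integral>\<^sup>+x. ennreal (\<bar>f x\<bar> * \<bar>g x\<bar>) \<partial>lborel) = 0"
      by (subst nn_integral_0_iff_AE) auto
    then show ?thesis
      by simp
  next
    case 2
    define cf cg where "cf = Nf * Ng / (a * Nf powr a)" and "cg = Nf * Ng / (b * Ng powr b)"
    have young: "\<bar>f x\<bar> * \<bar>g x\<bar> \<le> cf * \<bar>f x\<bar> powr a + cg * \<bar>g x\<bar> powr b" for x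
    proof -
      have "(\<bar>f x\<bar> / Nf) * (\<bar>g x\<bar> / Ng) \<le> (\<bar>f x\<bar> / Nf) powr a / a + (\<bar>g x\<bar> / Ng) powr b / b"
        using 2 by (intro Youngs_inequality a b ab) auto
      then show ?thesis
        using 2 by (simp add: cf_def cg_def powr_divide field_simps)
    qed
    have "(\<integral>\<^sup>+x. ennreal (\<bar>f x\<bar> * \<bar>g x\<bar>) \<partial>lborel)
        \<le> (\<integral>\<^sup>+x. ennreal cf * ennreal (\<bar>f x\<bar> powr a) + ennreal cg * ennreal (\<bar>g x\<bar> powr b) \<partial>lborel)"
    proof (rule nn_integral_mono)
      fix x
      have "0 \<le> cf" "0 \<le> cg"
        using 2 a b by (simp_all add: cf_def cg_def)
      have "ennreal (\<bar>f x\<bar> * \<bar>g x\<bar>) \<le> ennreal (cf * \<bar>f x\<bar> powr a + cg * \<bar>g x\<bar> powr b)"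
        using young[of x] by (rule ennreal_leI)
      also have "\<dots> = ennreal cf * ennreal (\<bar>f x\<bar> powr a) + ennreal cg * ennreal (\<bar>g x\<bar> powr b)"
        using \<open>0 \<le> cf\<close> \<open>0 \<le> cg\<close> by (simp add: ennreal_plus ennreal_mult)
      finally show "ennreal (\<bar>f x\<bar> * \<bar>g x\<bar>)
          \<le> ennreal cf * ennreal (\<bar>f x\<bar> powr a) + ennreal cg * ennreal (\<bar>g x\<bar> powr b)" .
    qed
    also have "\<dots> = ennreal cf * ennreal (Nf powr a) + ennreal cg * ennreal (Ng powr b)"
      using a b by (simp add: nn_integral_add nn_integral_cmult nn_integral_abs_powr_eq f g Nf_def Ng_def)
    also have "\<dots> = ennreal (Nf * Ng / a) + ennreal (Nf * Ng / b)"
      using 2 a b by (simp add: cf_def cg_def flip: ennreal_mult)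
    also have "\<dots> = ennreal (Nf * Ng * (1 / a + 1 / b))"
      using 2 a b by (simp add: distrib_left flip: ennreal_plus)
    finally show ?thesis
      by (simp add: ab Nf_def Ng_def)
  qed
qed

section \<open>Local L^s estimates\<close>

lemma powr_le_tangent_line:
  fixes t l s :: real
  assumes t: "0 \<le> t" and l: "0 < l" and s: "0 < s" "s < 1"
  shows "t powr s \<le> s * l powr (s - 1) * t + (1 - s) * l powr s"
proof (cases "t = 0")
  case False
  have "t powr s = t powr s * l powr (1 - s) * l powr (s - 1)"
    using l by (simp add: mult.assoc flip: powr_add)
  also have "\<dots> \<le> (s * t + (1 - s) * l) * l powr (s - 1)"
    using Youngs_inequality_0[of s "1 - s" t l] False t l s by (intro mult_right_mono) simp_all
  also have "\<dots> = s * l powr (s - 1) * t + (1 - s) * (l * l powr (s - 1))"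
    by (simp add: algebra_simps)
  also have "l * l powr (s - 1) = l powr s"
    using l by (simp add: powr_mult_base)
  finally show ?thesis .
qed (use s l in simp)

lemma powr_mult_le_interpolation:
  fixes x y Nx Ny a b s :: real
  assumes x: "0 \<le> x" and y: "0 \<le> y" "y \<le> Ny" and N: "0 < Nx" "0 < Ny"
    and a: "1 \<le> a" and b: "1 \<le> b" and s: "0 < s" "s \<le> 1" and sab: "1 \<le> s / a + s / b"
  shows "(x * y) powr s
    \<le> (Nx * Ny) powr s * (s / a * (x powr a / Nx powr a) + (1 - s / a) * (y powr b / Ny powr b))"
proof -
  define X Y \<theta> where "X = (x / Nx) powr a" and "Y = (y / Ny) powr b" and "\<theta> = s / a"
  have \<theta>: "0 \<le> \<theta>" "\<theta> \<le> 1"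
    using s a by (auto simp: \<theta>_def field_simps)
  have "Y \<le> 1"
    unfolding Y_def using y N b by (intro powr_le1) auto
  have "(y / Ny) powr s = Y powr (s / b)"
    using b by (simp add: Y_def powr_powr)
  \<comment> \<open>as Y \<le> 1, the exponent s / b of Y can be lowered to 1 - \<theta>\<close>
  also have "\<dots> \<le> Y powr (1 - \<theta>)"
    using \<open>Y \<le> 1\<close> sab by (intro powr_mono') (auto simp: Y_def \<theta>_def)
  finally have "(y / Ny) powr s \<le> Y powr (1 - \<theta>)" .
  moreover have "X powr \<theta> * Y powr (1 - \<theta>) \<le> \<theta> * X + (1 - \<theta>) * Y"
    using Youngs_inequality_0[of \<theta> "1 - \<theta>" X Y] \<theta> by (cases "X = 0 \<or> Y = 0") (auto simp: X_def Y_def)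
  moreover have "(x * y) powr s = (Nx * Ny) powr s * (X powr \<theta> * (y / Ny) powr s)"
    using x y N a by (simp add: X_def \<theta>_def powr_powr powr_mult powr_divide)
  ultimately have "(x * y) powr s \<le> (Nx * Ny) powr s * (\<theta> * X + (1 - \<theta>) * Y)"
    by (smt (verit) mult_left_mono powr_ge_zero)
  then show ?thesis
    using x y N by (simp add: X_def Y_def \<theta>_def powr_divide)
qed

lemma nn_integral_indicator_powr_le:
  fixes T :: "'a \<Rightarrow> real"
  assumes [measurable]: "T \<in> borel_measurable M" "A \<in> sets M"
    and V: "emeasure M A = ennreal V" "0 < V" and s: "0 < s" "s < 1" and c: "0 \<le> c"
    and le: "(\<integral>\<^sup>+x. indicator A x * ennreal \<bar>T x\<bar> \<partial>M) \<le> ennreal c"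
  shows "(\<integral>\<^sup>+x. indicator A x * ennreal (\<bar>T x\<bar> powr s) \<partial>M) \<le> ennreal (V powr (1 - s) * c powr s)"
proof (cases "c = 0")
  case True
  then have "AE x in M. indicator A x * ennreal \<bar>T x\<bar> = 0"
    using le by (subst nn_integral_0_iff_AE[symmetric]) auto
  then have "AE x in M. indicator A x * ennreal (\<bar>T x\<bar> powr s) = 0"
    by eventually_elim (simp add: indicator_def)
  then have "(\<integral>\<^sup>+x. indicator A x * ennreal (\<bar>T x\<bar> powr s) \<partial>M) = 0"
    by (subst nn_integral_0_iff_AE) auto
  then show ?thesis
    by simp
next
  case False
  \<comment> \<open>bound t powr s by its tangent line at the mean value l of \<bar>T\<bar> on A\<close>
  define l where "l = c / V"
  define k1 k2 where "k1 = s * l powr (s - 1)" and "k2 = (1 - s) * l powr s"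
  have l: "0 < l"
    using False c V by (simp add: l_def)
  have k: "0 \<le> k1" "0 \<le> k2"
    using s by (simp_all add: k1_def k2_def)
  have "(\<integral>\<^sup>+x. indicator A x * ennreal (\<bar>T x\<bar> powr s) \<partial>M)
      \<le> (\<integral>\<^sup>+x. ennreal k1 * (indicator A x * ennreal \<bar>T x\<bar>) + ennreal k2 * indicator A x \<partial>M)"
  proof (rule nn_integral_mono)
    fix x
    have "\<bar>T x\<bar> powr s \<le> k1 * \<bar>T x\<bar> + k2"
      unfolding k1_def k2_def using powr_le_tangent_line[OF _ l s] by simp
    then show "indicator A x * ennreal (\<bar>T x\<bar> powr s)
        \<le> ennreal k1 * (indicator A x * ennreal \<bar>T x\<bar>) + ennreal k2 * indicator A x"
      using k by (simp add: indicator_def ennreal_leI flip: ennreal_mult ennreal_plus)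
  qed
  also have "\<dots> = ennreal k1 * (\<integral>\<^sup>+x. indicator A x * ennreal \<bar>T x\<bar> \<partial>M) + ennreal k2 * ennreal V"
    using V by (simp add: nn_integral_add nn_integral_cmult)
  also have "\<dots> \<le> ennreal (k1 * c + k2 * V)"
    using le k c V by (simp add: mult_left_mono ennreal_plus ennreal_mult)
  also have "k1 * c + k2 * V = (s * (l * l powr (s - 1)) + (1 - s) * l powr s) * V"
    using V by (simp add: k1_def k2_def l_def algebra_simps)
  also have "l * l powr (s - 1) = l powr s"
    using l by (simp add: powr_mult_base)
  also have "(s * l powr s + (1 - s) * l powr s) * V = l powr s * V"
    by (simp add: algebra_simps)
  also have "\<dots> = V powr (1 - s) * c powr s"
    using V c by (simp add: l_def powr_divide powr_diff)
  finally show ?thesis .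
qed

lemma nn_integral_cball_average:
  fixes \<phi> :: "'a::euclidean_space \<Rightarrow> ennreal"
  assumes [measurable]: "\<phi> \<in> borel_measurable borel" and r: "0 \<le> r"
  shows "(\<integral>\<^sup>+u. (\<integral>\<^sup>+x. indicator (cball u r) x * \<phi> x \<partial>lborel) \<partial>lborel)
    = (\<integral>\<^sup>+x. \<phi> x \<partial>lborel) * emeasure lborel (cball (0::'a) r)"
proof -
  have [measurable]: "(\<lambda>(u, x). indicator (cball u r) x * \<phi> x) \<in> borel_measurable (lborel \<Otimes>\<^sub>M lborel)"
    unfolding indicator_def mem_cball by measurable
  have "(\<integral>\<^sup>+u. (\<integral>\<^sup>+x. indicator (cball u r) x * \<phi> x \<partial>lborel) \<partial>lborel)
      = (\<integral>\<^sup>+x. (\<integral>\<^sup>+u. \<phi> x * indicator (cball x r) u \<partial>lborel) \<partial>lborel)"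
    by (subst lborel_pair.Fubini') (auto intro!: nn_integral_cong simp: indicator_def mem_cball dist_commute)
  also have "\<dots> = (\<integral>\<^sup>+x. \<phi> x * emeasure lborel (cball (0::'a) r) \<partial>lborel)"
    using r by (simp add: nn_integral_cmult_indicator emeasure_cball)
  finally show ?thesis
    by (simp add: nn_integral_multc)
qed

lemma borel_measurable_local_lp_norm:
  fixes f :: "'a::euclidean_space \<Rightarrow> real"
  assumes [measurable]: "f \<in> borel_measurable borel" and p: "0 < p"
  shows "(\<lambda>u. lp_norm p (\<lambda>v. indicator (cball u r) v * f v)) \<in> borel_measurable borel"
proof -
  have "(\<lambda>(u, v). indicator (cball u r) v * \<bar>f v\<bar> powr p) \<in> borel_measurable (lborel \<Otimes>\<^sub>M lborel)"
    unfolding indicator_def mem_cball by measurable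
  from lborel.borel_measurable_lebesgue_integral[OF this]
  have [measurable]: "(\<lambda>u. \<integral>v. indicator (cball u r) v * \<bar>f v\<bar> powr p \<partial>lborel) \<in> borel_measurable borel"
    by simp
  show ?thesis
    unfolding lp_norm_def abs_indicator_mult_powr[OF p] by measurable
qed

lemma nn_integral_local_lp_norm_powr:
  fixes f :: "'a::euclidean_space \<Rightarrow> real"
  assumes f: "memLp p f" and p: "0 < p" and r: "0 \<le> r"
  shows "(\<integral>\<^sup>+u. ennreal (lp_norm p (\<lambda>v. indicator (cball u r) v * f v) powr p) \<partial>lborel)
    = ennreal (lp_norm p f powr p) * emeasure lborel (cball (0::'a) r)"
proof -
  have [measurable]: "f \<in> borel_measurable borel"
    using f by (simp add: memLp_def)
  have local: "ennreal (lp_norm p (\<lambda>v. indicator (cball u r) v * f v) powr p)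
      = (\<integral>\<^sup>+v. indicator (cball u r) v * ennreal (\<bar>f v\<bar> powr p) \<partial>lborel)" for u
  proof -
    have "memLp p (\<lambda>v. indicator (cball u r) v * f v)"
      by (rule memLp_indicator_mult[OF f p]) simp
    from nn_integral_abs_powr_eq[OF this p, symmetric] show ?thesis
      unfolding abs_indicator_mult_powr[OF p] by (auto intro: nn_integral_cong simp: indicator_def)
  qed
  show ?thesis
    unfolding local using nn_integral_cball_average[of "\<lambda>v. ennreal (\<bar>f v\<bar> powr p)" r] r
    by (simp add: nn_integral_abs_powr_eq[OF f p])
qed

lemma nn_integral_local_lp_norms_powr_le:
  fixes f g :: "'a::euclidean_space \<Rightarrow> real"
  assumes f: "memLp a f" and g: "memLp b g" and a: "1 \<le> a" and b: "1 \<le> b"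
    and s: "0 < s" "s \<le> 1" and sab: "1 \<le> s / a + s / b" and r: "0 \<le> r"
  shows "(\<integral>\<^sup>+u. ennreal ((lp_norm a (\<lambda>v. indicator (cball u r) v * f v)
        * lp_norm b (\<lambda>v. indicator (cball u r) v * g v)) powr s) \<partial>lborel)
    \<le> ennreal ((lp_norm a f * lp_norm b g) powr s) * emeasure lborel (cball (0::'a) r)"
proof -
  define \<alpha> \<beta> where "\<alpha> u = lp_norm a (\<lambda>v. indicator (cball u r) v * f v)"
    and "\<beta> u = lp_norm b (\<lambda>v. indicator (cball u r) v * g v)" for u
  define Nf Ng where "Nf = lp_norm a f" and "Ng = lp_norm b g"
  have [measurable]: "f \<in> borel_measurable borel" "g \<in> borel_measurable borel"
    using f g by (simp_all add: memLp_def)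
  have [measurable]: "\<alpha> \<in> borel_measurable borel" "\<beta> \<in> borel_measurable borel"
    unfolding \<alpha>_def[abs_def] \<beta>_def[abs_def] using a b by (simp_all add: borel_measurable_local_lp_norm)
  have \<alpha>: "0 \<le> \<alpha> u" "\<alpha> u \<le> Nf" and \<beta>: "0 \<le> \<beta> u" "\<beta> u \<le> Ng" for u
    using lp_norm_indicator_mult_le[OF f] lp_norm_indicator_mult_le[OF g] a b
    by (simp_all add: \<alpha>_def \<beta>_def Nf_def Ng_def lp_norm_nonneg)
  consider "Nf = 0 \<or> Ng = 0" | "0 < Nf" "0 < Ng"
    using lp_norm_nonneg unfolding Nf_def Ng_def by (metis order_less_le)
  then show ?thesis
  proof cases
    case 1
    then have "\<alpha> u = 0 \<or> \<beta> u = 0" for u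
      using \<alpha>[of u] \<beta>[of u] by auto
    then have "(\<lambda>u. ennreal ((\<alpha> u * \<beta> u) powr s)) = (\<lambda>_. 0)"
      by force
    then show ?thesis
      by (simp flip: \<alpha>_def \<beta>_def)
  next
    case 2
    define c1 c2 where "c1 = (Nf * Ng) powr s * (s / a) / Nf powr a"
      and "c2 = (Nf * Ng) powr s * (1 - s / a) / Ng powr b"
    have c: "0 \<le> c1" "0 \<le> c2"
      using s a by (simp_all add: c1_def c2_def)
    have "(\<integral>\<^sup>+u. ennreal ((\<alpha> u * \<beta> u) powr s) \<partial>lborel)
        \<le> (\<integral>\<^sup>+u. ennreal c1 * ennreal (\<alpha> u powr a) + ennreal c2 * ennreal (\<beta> u powr b) \<partial>lborel)"
    proof (rule nn_integral_mono)
      fix u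
      have "(\<alpha> u * \<beta> u) powr s \<le> c1 * \<alpha> u powr a + c2 * \<beta> u powr b"
        using powr_mult_le_interpolation[OF \<alpha>(1) \<beta> 2 a b s sab]
        by (simp add: c1_def c2_def algebra_simps)
      then show "ennreal ((\<alpha> u * \<beta> u) powr s)
          \<le> ennreal c1 * ennreal (\<alpha> u powr a) + ennreal c2 * ennreal (\<beta> u powr b)"
        using c by (simp add: ennreal_leI flip: ennreal_mult ennreal_plus)
    qed
    also have "\<dots> = (ennreal c1 * ennreal (Nf powr a) + ennreal c2 * ennreal (Ng powr b))
        * emeasure lborel (cball (0::'a) r)"
      using a b r
      by (subst nn_integral_add, measurable, subst (1 2) nn_integral_cmult, measurable)
        (simp add: nn_integral_local_lp_norm_powr[OF f] nn_integral_local_lp_norm_powr[OF g]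
          \<alpha>_def \<beta>_def Nf_def Ng_def distrib_right mult.assoc)
    also have "ennreal c1 * ennreal (Nf powr a) + ennreal c2 * ennreal (Ng powr b)
        = ennreal (c1 * Nf powr a + c2 * Ng powr b)"
      using c by (simp add: ennreal_mult ennreal_plus)
    also have "c1 * Nf powr a + c2 * Ng powr b = (Nf * Ng) powr s"
      using 2 by (simp add: c1_def c2_def field_simps)
    finally show ?thesis
      by (simp add: \<alpha>_def \<beta>_def Nf_def Ng_def)
  qed
qed

section \<open>The bilinear operator\<close>

definition bil_abs_bounded :: "('a::euclidean_space \<times> 'a) measure \<Rightarrow> real \<Rightarrow> real \<Rightarrow> bool" where
  "bil_abs_bounded \<mu> a b \<longleftrightarrow> (\<exists>C\<ge>0. \<forall>f g. memLp a f \<longrightarrow> memLp b g \<longrightarrow>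
      (\<integral>\<^sup>+x. (\<integral>\<^sup>+yz. ennreal (\<bar>f (x - fst yz)\<bar> * \<bar>g (x - snd yz)\<bar>) \<partial>\<mu>) \<partial>lborel)
        \<le> ennreal (C * lp_norm a f * lp_norm b g))"

lemma
  fixes \<mu> :: "('a::euclidean_space \<times> 'a) measure"
  assumes "sets \<mu> = sets borel"
  shows measurable_eq_lborel_pair: "measurable \<mu> M = measurable (lborel \<Otimes>\<^sub>M lborel) M"
    and measurable_pair_eq_lborel_pair:
      "measurable (N \<Otimes>\<^sub>M \<mu>) M = measurable (N \<Otimes>\<^sub>M (lborel \<Otimes>\<^sub>M lborel)) M"
proof -
  have sets: "sets \<mu> = sets (lborel \<Otimes>\<^sub>M (lborel :: 'a measure))"
    by (simp only: lborel_prod sets_lborel assms)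
  show "measurable \<mu> M = measurable (lborel \<Otimes>\<^sub>M lborel) M"
    by (rule measurable_cong_sets[OF sets refl])
  show "measurable (N \<Otimes>\<^sub>M \<mu>) M = measurable (N \<Otimes>\<^sub>M (lborel \<Otimes>\<^sub>M lborel)) M"
    by (rule measurable_cong_sets[OF sets_pair_measure_cong[OF refl sets] refl])
qed

lemma borel_measurable_T_bil:
  fixes \<mu> :: "('a::euclidean_space \<times> 'a) measure"
  assumes borel: "sets \<mu> = sets borel" and "finite_measure \<mu>"
    and [measurable]: "f \<in> borel_measurable borel" "g \<in> borel_measurable borel"
  shows "T_bil \<mu> f g \<in> borel_measurable borel"
proof -
  interpret finite_measure \<mu> by fact
  have "(\<lambda>(x, yz). f (x - fst yz) * g (x - snd yz)) \<in> borel_measurable (lborel \<Otimes>\<^sub>M \<mu>)"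
    unfolding measurable_pair_eq_lborel_pair[OF borel] by measurable
  from borel_measurable_lebesgue_integral[OF this] show ?thesis
    by (simp add: T_bil_def[abs_def])
qed

lemma ennreal_abs_T_bil_le:
  "ennreal \<bar>T_bil \<mu> f g x\<bar> \<le> (\<integral>\<^sup>+yz. ennreal (\<bar>f (x - fst yz)\<bar> * \<bar>g (x - snd yz)\<bar>) \<partial>\<mu>)"
proof (cases "integrable \<mu> (\<lambda>yz. f (x - fst yz) * g (x - snd yz))")
  case True
  from integral_norm_bound_ennreal[OF this] show ?thesis
    by (simp add: T_bil_def abs_mult)
qed (simp add: T_bil_def not_integrable_integral_eq)

lemma AE_integrable_bil_integrand:
  fixes \<mu> :: "('a::euclidean_space \<times> 'a) measure"
  assumes borel: "sets \<mu> = sets borel" and "finite_measure \<mu>"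
    and [measurable]: "f \<in> borel_measurable borel" "g \<in> borel_measurable borel"
    and finite: "(\<integral>\<^sup>+x. (\<integral>\<^sup>+yz. ennreal (\<bar>f (x - fst yz)\<bar> * \<bar>g (x - snd yz)\<bar>) \<partial>\<mu>) \<partial>lborel) \<noteq> \<infinity>"
  shows "AE x in lborel. integrable \<mu> (\<lambda>yz. f (x - fst yz) * g (x - snd yz))"
proof -
  interpret finite_measure \<mu> by fact
  have "(\<lambda>(x, yz). ennreal (\<bar>f (x - fst yz)\<bar> * \<bar>g (x - snd yz)\<bar>)) \<in> borel_measurable (lborel \<Otimes>\<^sub>M \<mu>)"
    unfolding measurable_pair_eq_lborel_pair[OF borel] by measurable
  then have "(\<lambda>x. \<integral>\<^sup>+yz. ennreal (\<bar>f (x - fst yz)\<bar> * \<bar>g (x - snd yz)\<bar>) \<partial>\<mu>) \<in> borel_measurable lborel"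
    by (simp add: borel_measurable_nn_integral)
  from nn_integral_PInf_AE[OF this finite]
  have "AE x in lborel. (\<integral>\<^sup>+yz. ennreal (\<bar>f (x - fst yz)\<bar> * \<bar>g (x - snd yz)\<bar>) \<partial>\<mu>) \<noteq> \<infinity>" .
  then show ?thesis
  proof eventually_elim
    case (elim x)
    have "(\<lambda>yz. f (x - fst yz) * g (x - snd yz)) \<in> borel_measurable \<mu>"
      unfolding measurable_eq_lborel_pair[OF borel] by measurable
    with elim show ?case
      by (intro integrableI_bounded) (auto simp: abs_mult top.not_eq_extremum)
  qed
qed

lemma bil_bounded_1_of_abs:
  fixes \<mu> :: "('a::euclidean_space \<times> 'a) measure"
  assumes borel: "sets \<mu> = sets borel" and fin: "finite_measure \<mu>" and abs: "bil_abs_bounded \<mu> a b"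
  shows "bil_bounded \<mu> a b 1"
proof -
  obtain C where "0 \<le> C" and C: "\<And>f g. memLp a f \<Longrightarrow> memLp b g \<Longrightarrow>
      (\<integral>\<^sup>+x. (\<integral>\<^sup>+yz. ennreal (\<bar>f (x - fst yz)\<bar> * \<bar>g (x - snd yz)\<bar>) \<partial>\<mu>) \<partial>lborel)
        \<le> ennreal (C * lp_norm a f * lp_norm b g)"
    using abs unfolding bil_abs_bounded_def by blast
  show ?thesis
    unfolding bil_bounded_def
  proof (intro exI allI impI conjI)
    fix f g :: "'a \<Rightarrow> real"
    assume f: "memLp a f" and g: "memLp b g"
    then have [measurable]: "f \<in> borel_measurable borel" "g \<in> borel_measurable borel"
      by (simp_all add: memLp_def)
    have M: "0 \<le> C * lp_norm a f * lp_norm b g"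
      using \<open>0 \<le> C\<close> by (simp add: lp_norm_nonneg)
    have "(\<integral>\<^sup>+x. ennreal (\<bar>T_bil \<mu> f g x\<bar> powr 1) \<partial>lborel) \<le> ennreal (C * lp_norm a f * lp_norm b g)"
      using order_trans[OF nn_integral_mono[OF ennreal_abs_T_bil_le] C[OF f g]] by simp
    note bound = memLp_of_nn_integral_le[OF borel_measurable_T_bil[OF borel fin] _ M this, simplified]
    show "memLp 1 (T_bil \<mu> f g)" "lp_norm 1 (T_bil \<mu> f g) \<le> C * lp_norm a f * lp_norm b g"
      using bound M by simp_all
    show "AE x in lborel. integrable \<mu> (\<lambda>yz. f (x - fst yz) * g (x - snd yz))"
      using C[OF f g] by (intro AE_integrable_bil_integrand[OF borel fin]) (auto simp: top_unique)
  qed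
qed

lemma nn_integral_bil_eq_push_minus:
  fixes \<mu> :: "('a::euclidean_space \<times> 'a) measure" and F G :: "'a \<Rightarrow> ennreal"
  assumes borel: "sets \<mu> = sets borel" and "finite_measure \<mu>"
    and [measurable]: "F \<in> borel_measurable borel" "G \<in> borel_measurable borel"
  shows "(\<integral>\<^sup>+x. (\<integral>\<^sup>+yz. F (x - fst yz) * G (x - snd yz) \<partial>\<mu>) \<partial>lborel)
    = (\<integral>\<^sup>+w. F (- w) * (\<integral>\<^sup>+t. G (t - w) \<partial>push_minus \<mu>) \<partial>lborel)"
proof -
  interpret finite_measure \<mu> by fact
  interpret pair_sigma_finite lborel \<mu> ..
  have "(\<integral>\<^sup>+x. (\<integral>\<^sup>+yz. F (x - fst yz) * G (x - snd yz) \<partial>\<mu>) \<partial>lborel)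
      = (\<integral>\<^sup>+yz. (\<integral>\<^sup>+x. F (x - fst yz) * G (x - snd yz) \<partial>lborel) \<partial>\<mu>)"
  proof -
    have "(\<lambda>(x, yz). F (x - fst yz) * G (x - snd yz)) \<in> borel_measurable (lborel \<Otimes>\<^sub>M \<mu>)"
      unfolding measurable_pair_eq_lborel_pair[OF borel] by measurable
    from Fubini'[OF this] show ?thesis
      by simp
  qed
  \<comment> \<open>substitute x = y - w\<close>
  also have "\<dots> = (\<integral>\<^sup>+yz. (\<integral>\<^sup>+w. F (- w) * G (fst yz - snd yz - w) \<partial>lborel) \<partial>\<mu>)"
  proof (rule nn_integral_cong)
    fix yz :: "'a \<times> 'a"
    have "(\<integral>\<^sup>+x. F (x - fst yz) * G (x - snd yz) \<partial>lborel)
        = (\<integral>\<^sup>+w. F (fst yz - w - fst yz) * G (fst yz - w - snd yz) \<partial>lborel)"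
      by (rule nn_integral_lborel_reflect[symmetric]) measurable
    then show "(\<integral>\<^sup>+x. F (x - fst yz) * G (x - snd yz) \<partial>lborel)
        = (\<integral>\<^sup>+w. F (- w) * G (fst yz - snd yz - w) \<partial>lborel)"
      by (simp add: algebra_simps)
  qed
  also have "\<dots> = (\<integral>\<^sup>+w. (\<integral>\<^sup>+yz. F (- w) * G (fst yz - snd yz - w) \<partial>\<mu>) \<partial>lborel)"
  proof -
    have "(\<lambda>(w, yz). F (- w) * G (fst yz - snd yz - w)) \<in> borel_measurable (lborel \<Otimes>\<^sub>M \<mu>)"
      unfolding measurable_pair_eq_lborel_pair[OF borel] by measurable
    from Fubini'[OF this] show ?thesis
      by simp
  qed
  also have "\<dots> = (\<integral>\<^sup>+w. F (- w) * (\<integral>\<^sup>+t. G (t - w) \<partial>push_minus \<mu>) \<partial>lborel)"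
  proof (rule nn_integral_cong)
    fix w :: 'a
    have "(\<lambda>yz. fst yz - snd yz) \<in> \<mu> \<rightarrow>\<^sub>M (lborel :: 'a measure)"
      unfolding measurable_eq_lborel_pair[OF borel] by simp
    then have "(\<integral>\<^sup>+t. G (t - w) \<partial>push_minus \<mu>) = (\<integral>\<^sup>+yz. G (fst yz - snd yz - w) \<partial>\<mu>)"
      unfolding push_minus_def by (rule nn_integral_distr) simp
    moreover have "(\<lambda>yz. G (fst yz - snd yz - w)) \<in> borel_measurable \<mu>"
      unfolding measurable_eq_lborel_pair[OF borel] by simp
    ultimately show "(\<integral>\<^sup>+yz. F (- w) * G (fst yz - snd yz - w) \<partial>\<mu>)
        = F (- w) * (\<integral>\<^sup>+t. G (t - w) \<partial>push_minus \<mu>)"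
      by (simp add: nn_integral_cmult)
  qed
  finally show ?thesis .
qed

lemma compact_support_imp_AE_norm_le:
  fixes \<mu> :: "('a::euclidean_space \<times> 'a) measure"
  assumes borel: "sets \<mu> = sets borel" and K: "compact K" "emeasure \<mu> (UNIV - K) = 0"
  obtains R where "0 < R" "AE yz in \<mu>. norm (fst yz) \<le> R \<and> norm (snd yz) \<le> R"
proof -
  obtain R where R: "0 < R" "\<And>yz. yz \<in> K \<Longrightarrow> norm yz \<le> R"
    using compact_imp_bounded[OF K(1)] bounded_pos by blast
  have "AE yz in \<mu>. yz \<in> K"
    using K compact_imp_closed[OF K(1)] by (intro AE_I'[of "UNIV - K"]) (auto simp: null_sets_def borel)
  then have "AE yz in \<mu>. norm (fst yz) \<le> R \<and> norm (snd yz) \<le> R"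
  proof eventually_elim
    case (elim yz)
    then show ?case
      using R(2)[OF elim] norm_fst_le[of "fst yz" "snd yz"] norm_snd_le[of "snd yz" "fst yz"] by simp
  qed
  with R(1) show ?thesis ..
qed

lemma nn_integral_cball_abs_T_bil_le:
  fixes \<mu> :: "('a::euclidean_space \<times> 'a) measure" and u :: 'a
  assumes borel: "sets \<mu> = sets borel"
    and [measurable]: "f \<in> borel_measurable borel" "g \<in> borel_measurable borel"
    and supp: "AE yz in \<mu>. norm (fst yz) \<le> R \<and> norm (snd yz) \<le> R"
  defines "f\<^sub>u \<equiv> \<lambda>v. indicator (cball u (2 * R)) v * f v"
    and "g\<^sub>u \<equiv> \<lambda>v. indicator (cball u (2 * R)) v * g v"
  shows "(\<integral>\<^sup>+x. indicator (cball u R) x * ennreal \<bar>T_bil \<mu> f g x\<bar> \<partial>lborel)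
    \<le> (\<integral>\<^sup>+x. (\<integral>\<^sup>+yz. ennreal (\<bar>f\<^sub>u (x - fst yz)\<bar> * \<bar>g\<^sub>u (x - snd yz)\<bar>) \<partial>\<mu>) \<partial>lborel)"
proof -
  have [measurable]: "f\<^sub>u \<in> borel_measurable borel" "g\<^sub>u \<in> borel_measurable borel"
    unfolding f\<^sub>u_def g\<^sub>u_def by (auto intro!: borel_measurable_times borel_measurable_indicator)
  have local: "T_bil \<mu> f g x = T_bil \<mu> f\<^sub>u g\<^sub>u x" if x: "x \<in> cball u R" for x
    unfolding T_bil_def
  proof (rule integral_cong_AE)
    show "(\<lambda>yz. f (x - fst yz) * g (x - snd yz)) \<in> borel_measurable \<mu>"
      "(\<lambda>yz. f\<^sub>u (x - fst yz) * g\<^sub>u (x - snd yz)) \<in> borel_measurable \<mu>"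
      unfolding measurable_eq_lborel_pair[OF borel] by measurable
    show "AE yz in \<mu>. f (x - fst yz) * g (x - snd yz) = f\<^sub>u (x - fst yz) * g\<^sub>u (x - snd yz)"
      using supp
    proof eventually_elim
      case (elim yz)
      have "dist u (x - y) \<le> 2 * R" if "norm y \<le> R" for y
        using dist_triangle[of u "x - y" x] x that by (simp add: dist_norm)
      with elim show ?case
        by (simp add: f\<^sub>u_def g\<^sub>u_def mem_cball)
    qed
  qed
  have "(\<integral>\<^sup>+x. indicator (cball u R) x * ennreal \<bar>T_bil \<mu> f g x\<bar> \<partial>lborel)
      \<le> (\<integral>\<^sup>+x. ennreal \<bar>T_bil \<mu> f\<^sub>u g\<^sub>u x\<bar> \<partial>lborel)"
    by (intro nn_integral_mono) (simp add: indicator_def local)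
  also have "\<dots> \<le> (\<integral>\<^sup>+x. (\<integral>\<^sup>+yz. ennreal (\<bar>f\<^sub>u (x - fst yz)\<bar> * \<bar>g\<^sub>u (x - snd yz)\<bar>) \<partial>\<mu>) \<partial>lborel)"
    by (intro nn_integral_mono ennreal_abs_T_bil_le)
  finally show ?thesis .
qed

lemma nn_integral_abs_T_bil_powr_le:
  fixes \<mu> :: "('a::euclidean_space \<times> 'a) measure"
  assumes borel: "sets \<mu> = sets borel" and fin: "finite_measure \<mu>"
    and supp: "AE yz in \<mu>. norm (fst yz) \<le> R \<and> norm (snd yz) \<le> R" and R: "0 < R"
    and C: "0 \<le> C" "\<And>f g. memLp a f \<Longrightarrow> memLp b g \<Longrightarrow>
      (\<integral>\<^sup>+x. (\<integral>\<^sup>+yz. ennreal (\<bar>f (x - fst yz)\<bar> * \<bar>g (x - snd yz)\<bar>) \<partial>\<mu>) \<partial>lborel)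
        \<le> ennreal (C * lp_norm a f * lp_norm b g)"
    and a: "1 \<le> a" and b: "1 \<le> b" and s: "0 < s" "s < 1" and sab: "1 \<le> s / a + s / b"
    and f: "memLp a f" and g: "memLp b g"
  defines "V \<equiv> measure lborel (cball (0::'a) R)" and "W \<equiv> measure lborel (cball (0::'a) (2 * R))"
  shows "(\<integral>\<^sup>+x. ennreal (\<bar>T_bil \<mu> f g x\<bar> powr s) \<partial>lborel)
    \<le> ennreal (W / V powr s * (C * (lp_norm a f * lp_norm b g)) powr s)"
proof -
  have [measurable]: "f \<in> borel_measurable borel" "g \<in> borel_measurable borel"
    using f g by (simp_all add: memLp_def)
  have V: "0 < V" "\<And>u::'a. emeasure lborel (cball u R) = ennreal V"
    using R by (simp_all add: V_def measure_def emeasure_cball)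
  have W: "0 \<le> W" "emeasure lborel (cball (0::'a) (2 * R)) = ennreal W"
    using R by (simp_all add: W_def measure_def emeasure_cball)
  define T where "T = T_bil \<mu> f g"
  define \<alpha> \<beta> where "\<alpha> u = lp_norm a (\<lambda>v. indicator (cball u (2 * R)) v * f v)"
    and "\<beta> u = lp_norm b (\<lambda>v. indicator (cball u (2 * R)) v * g v)" for u
  have [measurable]: "T \<in> borel_measurable borel"
    unfolding T_def by (rule borel_measurable_T_bil[OF borel fin]) simp_all
  have [measurable]: "\<alpha> \<in> borel_measurable borel" "\<beta> \<in> borel_measurable borel"
    unfolding \<alpha>_def[abs_def] \<beta>_def[abs_def] using a b by (simp_all add: borel_measurable_local_lp_norm)
  have local: "(\<integral>\<^sup>+x. indicator (cball u R) x * ennreal (\<bar>T x\<bar> powr s) \<partial>lborel)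
      \<le> ennreal (V powr (1 - s) * C powr s) * ennreal ((\<alpha> u * \<beta> u) powr s)" for u
  proof -
    have "memLp a (\<lambda>v. indicator (cball u (2 * R)) v * f v)" "memLp b (\<lambda>v. indicator (cball u (2 * R)) v * g v)"
      using a b by (simp_all add: memLp_indicator_mult f g)
    from order_trans[OF nn_integral_cball_abs_T_bil_le[OF borel _ _ supp] C(2)[OF this]]
    have "(\<integral>\<^sup>+x. indicator (cball u R) x * ennreal \<bar>T x\<bar> \<partial>lborel) \<le> ennreal (C * \<alpha> u * \<beta> u)"
      unfolding T_def \<alpha>_def \<beta>_def by simp
    from nn_integral_indicator_powr_le[OF _ _ V(2) V(1) s _ this] C(1)
    show ?thesis
      by (simp add: \<alpha>_def \<beta>_def lp_norm_nonneg powr_mult ennreal_mult' mult.assoc)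
  qed
  have "(\<integral>\<^sup>+x. ennreal (\<bar>T x\<bar> powr s) \<partial>lborel) * ennreal V
      = (\<integral>\<^sup>+u. (\<integral>\<^sup>+x. indicator (cball u R) x * ennreal (\<bar>T x\<bar> powr s) \<partial>lborel) \<partial>lborel)"
    using nn_integral_cball_average[of "\<lambda>x. ennreal (\<bar>T x\<bar> powr s)" R] R V(2)[of 0] by simp
  also have "\<dots> \<le> (\<integral>\<^sup>+u. ennreal (V powr (1 - s) * C powr s) * ennreal ((\<alpha> u * \<beta> u) powr s) \<partial>lborel)"
    by (intro nn_integral_mono local)
  also have "\<dots> = ennreal (V powr (1 - s) * C powr s) * (\<integral>\<^sup>+u. ennreal ((\<alpha> u * \<beta> u) powr s) \<partial>lborel)"
    by (rule nn_integral_cmult) measurable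
  also have "\<dots> \<le> ennreal (V powr (1 - s) * C powr s) * (ennreal ((lp_norm a f * lp_norm b g) powr s) * ennreal W)"
    using nn_integral_local_lp_norms_powr_le[OF f g a b s(1) _ sab, of "2 * R"] s R W
    unfolding \<alpha>_def \<beta>_def by (intro mult_left_mono) simp_all
  also have "\<dots> = ennreal (V powr (1 - s) * C powr s * ((lp_norm a f * lp_norm b g) powr s * W))"
    using W by (simp add: ennreal_mult)
  also have "V powr (1 - s) * C powr s * ((lp_norm a f * lp_norm b g) powr s * W)
      = W / V powr s * (C * (lp_norm a f * lp_norm b g)) powr s * V"
    using V(1) C(1) by (simp add: powr_diff powr_mult lp_norm_nonneg field_simps)
  also have "ennreal \<dots> = ennreal (W / V powr s * (C * (lp_norm a f * lp_norm b g)) powr s) * ennreal V"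
    using V(1) by (intro ennreal_mult'') simp
  finally show ?thesis
    using V(1) by (simp add: T_def ennreal_mult_le_mult_iff mult.commute[of _ "ennreal V"])
qed

lemma bil_bounded_of_abs:
  fixes \<mu> :: "('a::euclidean_space \<times> 'a) measure"
  assumes borel: "sets \<mu> = sets borel" and fin: "finite_measure \<mu>"
    and supp: "AE yz in \<mu>. norm (fst yz) \<le> R \<and> norm (snd yz) \<le> R" and R: "0 < R"
    and abs: "bil_abs_bounded \<mu> a b" and a: "1 \<le> a" and b: "1 \<le> b"
    and s: "0 < s" "s \<le> 1" and sab: "1 \<le> s / a + s / b"
  shows "bil_bounded \<mu> a b s"
proof (cases "s = 1")
  case True
  with bil_bounded_1_of_abs[OF borel fin abs] show ?thesis
    by simp
next
  case False
  with s have s': "0 < s" "s < 1"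
    by simp_all
  obtain C where C: "0 \<le> C" "\<And>f g. memLp a f \<Longrightarrow> memLp b g \<Longrightarrow>
      (\<integral>\<^sup>+x. (\<integral>\<^sup>+yz. ennreal (\<bar>f (x - fst yz)\<bar> * \<bar>g (x - snd yz)\<bar>) \<partial>\<mu>) \<partial>lborel)
        \<le> ennreal (C * lp_norm a f * lp_norm b g)"
    using abs unfolding bil_abs_bounded_def by blast
  define V W where "V = measure lborel (cball (0::'a) R)" and "W = measure lborel (cball (0::'a) (2 * R))"
  show ?thesis
    unfolding bil_bounded_def
  proof (intro exI allI impI conjI)
    fix f g :: "'a \<Rightarrow> real"
    assume f: "memLp a f" and g: "memLp b g"
    then have [measurable]: "f \<in> borel_measurable borel" "g \<in> borel_measurable borel"
      by (simp_all add: memLp_def)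
    have "0 \<le> W / V powr s * (C * (lp_norm a f * lp_norm b g)) powr s"
      by (simp add: W_def)
    note bound = memLp_of_nn_integral_le[OF borel_measurable_T_bil[OF borel fin] s'(1) this
        nn_integral_abs_T_bil_powr_le[OF borel fin supp R C a b s' sab f g, folded V_def W_def]]
    have "(W / V powr s * (C * (lp_norm a f * lp_norm b g)) powr s) powr (1 / s)
        = (W / V powr s) powr (1 / s) * ((C * (lp_norm a f * lp_norm b g)) powr s) powr (1 / s)"
      by (rule powr_mult)
    also have "((C * (lp_norm a f * lp_norm b g)) powr s) powr (1 / s) = C * (lp_norm a f * lp_norm b g)"
      using s' C(1) by (simp add: powr_powr lp_norm_nonneg)
    finally have "(W / V powr s * (C * (lp_norm a f * lp_norm b g)) powr s) powr (1 / s)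
        = (W / V powr s) powr (1 / s) * (C * (lp_norm a f * lp_norm b g))" .
    with bound show "memLp s (T_bil \<mu> f g)"
      "lp_norm s (T_bil \<mu> f g) \<le> (W / V powr s) powr (1 / s) * C * lp_norm a f * lp_norm b g"
      by (simp_all add: mult.assoc)
    show "AE x in lborel. integrable \<mu> (\<lambda>yz. f (x - fst yz) * g (x - snd yz))"
      using C(2)[OF f g] by (intro AE_integrable_bil_integrand[OF borel fin]) (auto simp: top_unique)
  qed
qed

lemma bil_abs_bounded_1_1:
  fixes \<mu> :: "('a::euclidean_space \<times> 'a) measure"
  assumes borel: "sets \<mu> = sets borel" and fin: "finite_measure \<mu>"
    and [measurable]: "h \<in> borel_measurable lborel" and hB: "AE t in lborel. h t \<le> B"
    and density: "push_minus \<mu> = density lborel (\<lambda>t. ennreal (h t))"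
  shows "bil_abs_bounded \<mu> 1 1"
  unfolding bil_abs_bounded_def
proof (intro exI[of _ "max B 0"] conjI allI impI)
  fix f g :: "'a \<Rightarrow> real"
  assume f: "memLp 1 f" and g: "memLp 1 g"
  then have [measurable]: "f \<in> borel_measurable borel" "g \<in> borel_measurable borel"
    by (simp_all add: memLp_def)
  have inner: "(\<integral>\<^sup>+t. ennreal \<bar>g (t - w)\<bar> \<partial>push_minus \<mu>) \<le> ennreal (max B 0) * ennreal (lp_norm 1 g)" for w
  proof -
    have "(\<integral>\<^sup>+t. ennreal \<bar>g (t - w)\<bar> \<partial>push_minus \<mu>) = (\<integral>\<^sup>+t. ennreal (h t) * ennreal \<bar>g (t - w)\<bar> \<partial>lborel)"
      unfolding density by (simp add: nn_integral_density)
    also have "\<dots> \<le> (\<integral>\<^sup>+t. ennreal (max B 0) * ennreal \<bar>g (t - w)\<bar> \<partial>lborel)"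
      using hB by (intro nn_integral_mono_AE) (auto elim!: eventually_mono intro!: mult_right_mono ennreal_leI)
    also have "\<dots> = ennreal (max B 0) * ennreal (lp_norm 1 g)"
      using nn_integral_lborel_translate[of "\<lambda>t. ennreal \<bar>g t\<bar>" "- w"] nn_integral_abs_eq_lp_norm_1[OF g]
      by (simp add: nn_integral_cmult)
    finally show ?thesis .
  qed
  have "(\<integral>\<^sup>+x. (\<integral>\<^sup>+yz. ennreal (\<bar>f (x - fst yz)\<bar> * \<bar>g (x - snd yz)\<bar>) \<partial>\<mu>) \<partial>lborel)
      = (\<integral>\<^sup>+w. ennreal \<bar>f (- w)\<bar> * (\<integral>\<^sup>+t. ennreal \<bar>g (t - w)\<bar> \<partial>push_minus \<mu>) \<partial>lborel)"
    using nn_integral_bil_eq_push_minus[OF borel fin, of "\<lambda>v. ennreal \<bar>f v\<bar>" "\<lambda>v. ennreal \<bar>g v\<bar>"]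
    by (simp add: ennreal_mult)
  also have "\<dots> \<le> (\<integral>\<^sup>+w. ennreal \<bar>f (- w)\<bar> * (ennreal (max B 0) * ennreal (lp_norm 1 g)) \<partial>lborel)"
    by (intro nn_integral_mono mult_left_mono inner) simp
  also have "\<dots> = ennreal (lp_norm 1 f) * (ennreal (max B 0) * ennreal (lp_norm 1 g))"
    using nn_integral_abs_eq_lp_norm_1[OF memLp_reflect[OF f]] lp_norm_reflect[OF f]
    by (simp add: nn_integral_multc)
  also have "\<dots> = ennreal (max B 0 * lp_norm 1 f * lp_norm 1 g)"
    by (simp add: lp_norm_nonneg mult_ac flip: ennreal_mult)
  finally show "(\<integral>\<^sup>+x. (\<integral>\<^sup>+yz. ennreal (\<bar>f (x - fst yz)\<bar> * \<bar>g (x - snd yz)\<bar>) \<partial>\<mu>) \<partial>lborel)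
      \<le> ennreal (max B 0 * lp_norm 1 f * lp_norm 1 g)" .
qed simp

lemma bil_abs_bounded_conjugate:
  fixes \<mu> :: "('a::euclidean_space \<times> 'a) measure"
  assumes borel: "sets \<mu> = sets borel" and fin: "finite_measure \<mu>"
    and q: "1 < q" and lin: "lin_bounded (push_minus \<mu>) p q"
  shows "bil_abs_bounded \<mu> (q / (q - 1)) p"
proof -
  obtain C where C: "\<And>g. memLp p g \<Longrightarrow> (AE x in lborel. integrable (push_minus \<mu>) (\<lambda>t. g (x - t))) \<and>
      memLp q (T_lin (push_minus \<mu>) g) \<and> lp_norm q (T_lin (push_minus \<mu>) g) \<le> C * lp_norm p g"
    using lin unfolding lin_bounded_def by blast
  have q': "1 < q / (q - 1)" "1 / (q / (q - 1)) + 1 / q = 1"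
    using q by (simp_all add: field_simps)
  show ?thesis
    unfolding bil_abs_bounded_def
  proof (intro exI[of _ "max C 0"] conjI allI impI)
    fix f g :: "'a \<Rightarrow> real"
    assume f: "memLp (q / (q - 1)) f" and g: "memLp p g"
    then have [measurable]: "f \<in> borel_measurable borel" "g \<in> borel_measurable borel"
      by (simp_all add: memLp_def)
    define T where "T = T_lin (push_minus \<mu>) (\<lambda>x. \<bar>g (- x)\<bar>)"
    have "memLp p (\<lambda>x. \<bar>g (- x)\<bar>)" "lp_norm p (\<lambda>x. \<bar>g (- x)\<bar>) = lp_norm p g"
      using memLp_reflect[OF g] lp_norm_reflect[OF g] by (simp_all add: memLp_def lp_norm_def)
    with C[of "\<lambda>x. \<bar>g (- x)\<bar>"] have T: "AE w in lborel. integrable (push_minus \<mu>) (\<lambda>t. \<bar>g (t - w)\<bar>)"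
      "memLp q T" "lp_norm q T \<le> C * lp_norm p g"
      unfolding T_def by simp_all
    have "(\<integral>\<^sup>+x. (\<integral>\<^sup>+yz. ennreal (\<bar>f (x - fst yz)\<bar> * \<bar>g (x - snd yz)\<bar>) \<partial>\<mu>) \<partial>lborel)
        = (\<integral>\<^sup>+w. ennreal \<bar>f (- w)\<bar> * (\<integral>\<^sup>+t. ennreal \<bar>g (t - w)\<bar> \<partial>push_minus \<mu>) \<partial>lborel)"
      using nn_integral_bil_eq_push_minus[OF borel fin, of "\<lambda>v. ennreal \<bar>f v\<bar>" "\<lambda>v. ennreal \<bar>g v\<bar>"]
      by (simp add: ennreal_mult)
    also have "\<dots> = (\<integral>\<^sup>+w. ennreal (\<bar>f (- w)\<bar> * \<bar>T w\<bar>) \<partial>lborel)"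
      using T(1)
    proof (intro nn_integral_cong_AE, eventually_elim)
      case (elim w)
      then have "(\<integral>\<^sup>+t. ennreal \<bar>g (t - w)\<bar> \<partial>push_minus \<mu>) = ennreal (T w)"
        by (simp add: T_def T_lin_def nn_integral_eq_integral)
      moreover have "0 \<le> T w"
        by (simp add: T_def T_lin_def)
      ultimately show ?case
        by (simp add: ennreal_mult)
    qed
    also have "\<dots> \<le> ennreal (lp_norm (q / (q - 1)) f * lp_norm q T)"
      using nn_integral_mult_le_lp_norm[OF q'(1) q q'(2) memLp_reflect[OF f] T(2)] lp_norm_reflect[OF f] by simp
    also have "\<dots> \<le> ennreal (max C 0 * lp_norm (q / (q - 1)) f * lp_norm p g)"
    proof (rule ennreal_leI)
      have "lp_norm q T \<le> max C 0 * lp_norm p g"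
        using T(3) by (rule order_trans) (simp add: mult_right_mono lp_norm_nonneg)
      from mult_left_mono[OF this lp_norm_nonneg[of "q / (q - 1)" f]]
      show "lp_norm (q / (q - 1)) f * lp_norm q T \<le> max C 0 * lp_norm (q / (q - 1)) f * lp_norm p g"
        by (simp add: mult_ac)
    qed
    finally show "(\<integral>\<^sup>+x. (\<integral>\<^sup>+yz. ennreal (\<bar>f (x - fst yz)\<bar> * \<bar>g (x - snd yz)\<bar>) \<partial>\<mu>) \<partial>lborel)
        \<le> ennreal (max C 0 * lp_norm (q / (q - 1)) f * lp_norm p g)" .
  qed simp
qed

lemma conjugate_exponent_interpolation:
  fixes p q s :: real
  assumes p: "1 \<le> p" and pq: "p < q"
  defines "q' \<equiv> q / (q - 1)"
  shows "1 \<le> q'" and "p * q' / (p + q') \<le> 1"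
    and "p * q' / (p + q') \<le> s \<Longrightarrow> 0 < s \<and> 1 \<le> s / q' + s / p"
proof -
  have q: "1 < q"
    using p pq by simp
  then show q': "1 \<le> q'"
    by (simp add: q'_def field_simps)
  have "0 \<le> (q - 1) * (q - p)"
    using pq q by simp
  then have "p * q' \<le> p + q'"
    using q unfolding q'_def by (simp add: field_simps)
  then show "p * q' / (p + q') \<le> 1"
    using p q' by simp
  assume s: "p * q' / (p + q') \<le> s"
  have "0 < p * q' / (p + q')"
    using p q' by simp
  with s have "0 < s" "p * q' \<le> s * (p + q')"
    using p q' by (linarith, simp add: pos_divide_le_eq)
  then show "0 < s \<and> 1 \<le> s / q' + s / p"
    using p q' by (simp add: field_simps)
qed

theorem mainTheorem5:
  fixes \<mu> :: "('a::euclidean_space \<times> 'a) measure"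
  assumes borel: "sets \<mu> = sets borel"
    and fin: "finite_measure \<mu>"
    and cpt: "\<exists>K. compact K \<and> emeasure \<mu> (UNIV - K) = 0"
    and dens: "\<exists>h B. h \<in> borel_measurable lborel \<and> (\<forall>t. 0 \<le> h t) \<and>
                 (AE t in lborel. h t \<le> B) \<and>
                 push_minus \<mu> = density lborel (\<lambda>t. ennreal (h t))"
  shows "(bil_bounded \<mu> 1 1 1 \<and> (\<forall>s\<in>{1/2..1}. bil_bounded \<mu> 1 1 s)) \<and>
         (\<forall>p q. 1 \<le> p \<longrightarrow> p < q \<longrightarrow> lin_bounded (push_minus \<mu>) p q \<longrightarrow>
           bil_bounded \<mu> (q / (q - 1)) p 1 \<and>
           (\<forall>s\<in>{p * (q / (q - 1)) / (p + q / (q - 1)) .. 1}. bil_bounded \<mu> (q / (q - 1)) p s))"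
proof -
  obtain R where R: "0 < R" and supp: "AE yz in \<mu>. norm (fst yz) \<le> R \<and> norm (snd yz) \<le> R"
    using cpt compact_support_imp_AE_norm_le[OF borel] by blast
  note bounded = bil_bounded_of_abs[OF borel fin supp R]
  obtain h B where "h \<in> borel_measurable lborel" "AE t in lborel. h t \<le> B"
    "push_minus \<mu> = density lborel (\<lambda>t. ennreal (h t))"
    using dens by blast
  from bil_abs_bounded_1_1[OF borel fin this]
  have L1: "bil_bounded \<mu> 1 1 s" if "s \<in> {1/2..1}" for s
    using that by (intro bounded) auto
  have conj: "bil_bounded \<mu> (q / (q - 1)) p s"
    if "1 \<le> p" "p < q" "lin_bounded (push_minus \<mu>) p q"
      and "p * (q / (q - 1)) / (p + q / (q - 1)) \<le> s" "s \<le> 1" for p q s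
    using conjugate_exponent_interpolation[OF that(1,2)] that
    by (intro bounded bil_abs_bounded_conjugate[OF borel fin]) auto
  show ?thesis
    using L1 conj conjugate_exponent_interpolation(2) by auto
qed

end
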